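(* There is an absolute constant $c>0$ such that the following holds. Let $\mathcal{F}$ be a finite class of functions $\mathcal{S}\times\mathcal{A}\to[0,V_{\max}]$ and $\Pi$ a finite class of policies. Suppose that for every $\pi\in\Pi$: (i) $\mathcal{T}^\pi f\in\mathcal{F}$ for all $f\in\mathcal{F}$, and (ii) $C_\pi:=\|d^\pi/d^D\|_\infty<\infty$. Let $\mathcal{D}$ consist of $n$ i.i.d. samples from $D$, and for each $\pi\in\Pi$ let $\hat f^\pi\in\arg\min_{f\in\mathcal{F}}\widehat{\mathcal{E}}(f;\pi)$. Let $\hat\pi\in\arg\max_{\pi\in\Pi}J_{\hat f^\pi}(\pi)$. Then for any $\delta\in(0,1)$, with probability at least $1-\delta$, for every $\pi_{\mathrm{cp}}\in\Pi$, $$J(\pi_{\mathrm{cp}})-J(\hat\pi)\le c\,\frac{V_{\max}}{1-\gamma}\sqrt{\frac{(\max_{\pi\in\Pi}C_\pi)\log(|\mathcal{F}||\Pi|/\delta)}{n}}.$$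
   Context: MDP $(\mathcal{S},\mathcal{A},P,R,\gamma,d_0)$ with finite $\mathcal{S},\mathcal{A}$, deterministic reward $R:\mathcal{S}\times\mathcal{A}\to[0,R_{\max}]$, $\gamma\in[0,1)$, $V_{\max}=R_{\max}/(1-\gamma)$. For a policy $\pi$: $J(\pi)=\mathbb{E}_\pi[\sum_t\gamma^tr_t]$; $f(s,\pi)=\sum_a\pi(a\mid s)f(s,a)$; $J_f(\pi)=\mathbb{E}_{s\sim d_0}[f(s,\pi)]$; $(\mathcal{T}^\pi f)(s,a)=R(s,a)+\gamma\mathbb{E}_{s'\sim P(\cdot\mid s,a)}[f(s',\pi)]$; $d^\pi(s,a)=(1-\gamma)\sum_{t\ge0}\gamma^t\Pr_\pi[s_t=s,a_t=a]$. Data distribution $d^D\in\Delta(\mathcal{S}\times\mathcal{A})$; $D$ is the distribution of $(s,a,r,s')$ with $(s,a)\sim d^D$, $r=R(s,a)$, $s'\sim P(\cdot\mid s,a)$. $\|d^\pi/d^D\|_\infty=\max_{s,a}d^\pi(s,a)/d^D(s,a)$ ($0/0=0$, nonzero$/0=\infty$). Empirical losses on dataset $\mathcal{D}$: $\widehat{\mathcal{L}}(f';f,\pi)=\frac{1}{|\mathcal{D}|}\sum_{(s,a,r,s')\in\mathcal{D}}(f'(s,a)-r-\gamma f(s',\pi))^2$ and $\widehat{\mathcal{E}}(f;\pi)=\max_{g\in\mathcal{F}}\big[\widehat{\mathcal{L}}(f;f,\pi)-\widehat{\mathcal{L}}(g;f,\pi)\big]$. Ties in argmin/argmax are broken arbitrarily.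 *)

theory Defs
  imports "HOL-Probability.Probability"
begin

text \<open>States and actions are natural numbers drawn from finite carrier sets S and A.
  Policies are stochastic: nat => nat pmf. Q-functions: nat => nat => real.\<close>

type_synonym policy = "nat \<Rightarrow> nat pmf"
type_synonym qfun = "nat \<Rightarrow> nat \<Rightarrow> real"
type_synonym sample = "nat \<times> nat \<times> real \<times> nat"

fun sdist :: "(nat \<Rightarrow> nat \<Rightarrow> nat pmf) \<Rightarrow> nat pmf \<Rightarrow> policy \<Rightarrow> nat \<Rightarrow> nat pmf" where
  "sdist P d0 pol 0 = d0"
| "sdist P d0 pol (Suc t) = bind_pmf (sdist P d0 pol t) (\<lambda>s. bind_pmf (pol s) (\<lambda>a. P s a))"

definition sadist :: "(nat \<Rightarrow> nat \<Rightarrow> nat pmf) \<Rightarrow> nat pmf \<Rightarrow> policy \<Rightarrow> nat \<Rightarrow> (nat \<times> nat) pmf" where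
  "sadist P d0 pol t = bind_pmf (sdist P d0 pol t) (\<lambda>s. map_pmf (\<lambda>a. (s, a)) (pol s))"

definition Jret :: "qfun \<Rightarrow> real \<Rightarrow> (nat \<Rightarrow> nat \<Rightarrow> nat pmf) \<Rightarrow> nat pmf \<Rightarrow> policy \<Rightarrow> real" where
  "Jret R \<gamma> P d0 pol =
     (\<Sum>t. \<gamma> ^ t * measure_pmf.expectation (sadist P d0 pol t) (\<lambda>(s, a). R s a))"

definition docc :: "real \<Rightarrow> (nat \<Rightarrow> nat \<Rightarrow> nat pmf) \<Rightarrow> nat pmf \<Rightarrow> policy \<Rightarrow> nat \<Rightarrow> nat \<Rightarrow> real" where
  "docc \<gamma> P d0 pol s a = (1 - \<gamma>) * (\<Sum>t. \<gamma> ^ t * pmf (sadist P d0 pol t) (s, a))"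

text \<open>Concentrability C_pi = max_{s,a} d^pol(s,a)/d^D(s,a) (with 0/0 = 0; finiteness is a
  separate hypothesis, under which this Max is the paper's quantity).\<close>
definition Cconc :: "nat set \<Rightarrow> nat set \<Rightarrow> real \<Rightarrow> (nat \<Rightarrow> nat \<Rightarrow> nat pmf) \<Rightarrow> nat pmf
                     \<Rightarrow> (nat \<times> nat) pmf \<Rightarrow> policy \<Rightarrow> real" where
  "Cconc S A \<gamma> P d0 dD pol = Max ((\<lambda>(s, a). docc \<gamma> P d0 pol s a / pmf dD (s, a)) ` (S \<times> A))"

definition fpol :: "qfun \<Rightarrow> policy \<Rightarrow> nat \<Rightarrow> real" where
  "fpol f pol s = measure_pmf.expectation (pol s) (\<lambda>a. f s a)"

definition Jf :: "nat pmf \<Rightarrow> qfun \<Rightarrow> policy \<Rightarrow> real" where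
  "Jf d0 f pol = measure_pmf.expectation d0 (\<lambda>s. fpol f pol s)"

definition Tpi :: "nat set \<Rightarrow> nat set \<Rightarrow> qfun \<Rightarrow> real \<Rightarrow> (nat \<Rightarrow> nat \<Rightarrow> nat pmf)
                   \<Rightarrow> policy \<Rightarrow> qfun \<Rightarrow> qfun" where
  "Tpi S A R \<gamma> P pol f = (\<lambda>s a. if s \<in> S \<and> a \<in> A
       then R s a + \<gamma> * measure_pmf.expectation (P s a) (\<lambda>s'. fpol f pol s') else 0)"

definition Ddist :: "qfun \<Rightarrow> (nat \<Rightarrow> nat \<Rightarrow> nat pmf) \<Rightarrow> (nat \<times> nat) pmf \<Rightarrow> sample pmf" where
  "Ddist R P dD = bind_pmf dD (\<lambda>(s, a). map_pmf (\<lambda>s'. (s, a, R s a, s')) (P s a))"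

definition dataset :: "nat \<Rightarrow> sample pmf \<Rightarrow> (nat \<Rightarrow> sample) pmf" where
  "dataset n D = Pi_pmf {..<n} (0, 0, 0, 0) (\<lambda>_. D)"

definition Lhat :: "real \<Rightarrow> nat \<Rightarrow> (nat \<Rightarrow> sample) \<Rightarrow> qfun \<Rightarrow> qfun \<Rightarrow> policy \<Rightarrow> real" where
  "Lhat \<gamma> n Ds f' f pol =
     (1 / real n) * (\<Sum>i<n. (case Ds i of (s, a, r, s') \<Rightarrow> (f' s a - r - \<gamma> * fpol f pol s')\<^sup>2))"

definition Ehat :: "qfun set \<Rightarrow> real \<Rightarrow> nat \<Rightarrow> (nat \<Rightarrow> sample) \<Rightarrow> qfun \<Rightarrow> policy \<Rightarrow> real" where
  "Ehat F \<gamma> n Ds f pol = Max ((\<lambda>g. Lhat \<gamma> n Ds f f pol - Lhat \<gamma> n Ds g f pol) ` F)"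

end

theory Submission
  imports Defs
begin

text \<open>
  Closedness of \<open>F\<close> under every \<open>\<T>\<^sup>\<pi>\<close> and the contraction property put the fixed point
  \<open>Q\<^sup>\<pi>\<close> into \<open>F\<close>, and \<open>Q\<^sup>\<pi>\<close> has small empirical Bellman error.
  For \<open>g, f \<in> F\<close> the excess squared loss of \<open>g\<close> over \<open>\<T>\<^sup>\<pi> f\<close> has mean
  \<open>\<parallel>g - \<T>\<^sup>\<pi> f\<parallel>\<^sup>2\<close> (in \<open>L\<^sub>2(d\<^sup>D)\<close>) and second moment at most \<open>4 V\<^sup>2\<close> times that mean, so a
  one-sided Chernoff bound and a union bound over \<open>F \<times> F \<times> \<Pi>\<close> show that with probability
  \<open>1 - \<delta>\<close> every empirical excess loss is at least half its mean minus
  \<open>\<epsilon> = 8 V\<^sup>2 log (|F|\<^sup>2 |\<Pi>| / \<delta>) / n\<close>. On that event every minimiser \<open>f\<close> of \<open>\<E>(\<cdot>; \<pi>)\<close>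
  has \<open>\<parallel>f - \<T>\<^sup>\<pi> f\<parallel>\<^sup>2 \<le> 4 \<epsilon>\<close>.
  The performance difference lemma writes \<open>J\<^sub>f(\<pi>) - J(\<pi>)\<close> as \<open>(1-\<gamma>)\<^sup>-\<^sup>1 E\<^bsub>d\<^sup>\<pi>\<^esub>[f - \<T>\<^sup>\<pi> f]\<close>, and
  Cauchy--Schwarz with \<open>d\<^sup>\<pi> \<le> C\<^sub>\<pi> d\<^sup>D\<close> bounds it by \<open>(1-\<gamma>)\<^sup>-\<^sup>1 (C\<^sub>\<pi> \<parallel>f - \<T>\<^sup>\<pi> f\<parallel>\<^sup>2)\<^sup>1\<^sup>/\<^sup>2\<close>.
  Since the chosen policy maximises the estimated values, its regret is at most twice this bound.
\<close>

lemma integrable_measure_pmf_bounded: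
  fixes h :: "'a \<Rightarrow> real"
  assumes "\<And>x. x \<in> set_pmf M \<Longrightarrow> \<bar>h x\<bar> \<le> d"
  shows "integrable (measure_pmf M) h"
  by (rule measure_pmf.integrable_const_bound[where B=d]) (use assms in \<open>auto intro!: AE_pmfI\<close>)

lemma abs_expectation_pmf_le:
  fixes h :: "'a \<Rightarrow> real"
  assumes "\<And>x. x \<in> set_pmf M \<Longrightarrow> \<bar>h x\<bar> \<le> d"
  shows "\<bar>measure_pmf.expectation M h\<bar> \<le> d"
proof -
  have "\<bar>measure_pmf.expectation M h\<bar> \<le> measure_pmf.expectation M (\<lambda>x. \<bar>h x\<bar>)"
    using integral_norm_bound[of M h] by simp
  also have "\<dots> \<le> measure_pmf.expectation M (\<lambda>x. d)"
    by (intro integral_mono_AE integrable_measure_pmf_bounded[of _ _ d] AE_pmfI)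
       (use assms in \<open>auto intro: order.trans[OF abs_ge_zero]\<close>)
  finally show ?thesis by simp
qed

lemma expectation_bind_pmf_finite:
  fixes h :: "'b \<Rightarrow> real"
  assumes "finite X" "set_pmf p \<subseteq> X" "\<And>x. x \<in> X \<Longrightarrow> finite (set_pmf (f x))"
  shows "measure_pmf.expectation (bind_pmf p f) h
       = measure_pmf.expectation p (\<lambda>x. measure_pmf.expectation (f x) h)"
proof -
  have "measure_pmf.expectation (p \<bind> f) h = (\<Sum>x\<in>X. pmf p x *\<^sub>R measure_pmf.expectation (f x) h)"
    by (rule pmf_expectation_bind) (use assms in auto)
  also have "\<dots> = measure_pmf.expectation p (\<lambda>x. measure_pmf.expectation (f x) h)"
    by (subst integral_measure_pmf[OF assms(1)]) (use assms(2) in auto)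
  finally show ?thesis .
qed

lemma expectation_pmf_eq_sum:
  fixes h :: "'a \<Rightarrow> real"
  assumes "finite X" "set_pmf p \<subseteq> X"
  shows "measure_pmf.expectation p h = (\<Sum>x\<in>X. pmf p x * h x)"
  by (subst integral_measure_pmf[OF assms(1)]) (use assms(2) in auto)

lemma exp_le_one_plus_x_plus_square:
  fixes x :: real
  assumes "\<bar>x\<bar> \<le> 1"
  shows "exp x \<le> 1 + x + x\<^sup>2"
proof (cases "x \<ge> 0")
  case True
  then show ?thesis using exp_bound assms by auto
next
  case False
  define y where "y = -x"
  have y: "0 \<le> y" "y \<le> 1" using False assms y_def by auto
  have lower: "1 + y + y\<^sup>2/2 \<le> exp y" using exp_lower_Taylor_quadratic y by auto
  \<comment> \<open>\<open>exp (-y) \<le> 1 - y + y\<^sup>2\<close> because \<open>(1 - y + y\<^sup>2) (1 + y + y\<^sup>2/2) = 1 + (y\<^sup>2 + y\<^sup>3 + y\<^sup>4)/2\<close>.\<close>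
  have prod: "1 \<le> (1 - y + y\<^sup>2) * (1 + y + y\<^sup>2/2)"
  proof -
    have "(1 - y + y\<^sup>2) * (1 + y + y\<^sup>2/2) = 1 + y\<^sup>2/2 + y^3/2 + y^4/2"
      by (simp add: power2_eq_square power3_eq_cube power4_eq_xxxx divide_simps) (simp add: algebra_simps)
    moreover have "y^3 \<ge> 0" "y^4 \<ge> 0" "y\<^sup>2 \<ge> 0" using y by auto
    ultimately show ?thesis by linarith
  qed
  have pos: "0 < 1 - y + y\<^sup>2"
  proof (cases "y < 1")
    case True
    then show ?thesis using zero_le_power2[of y] by linarith
  qed (use y in simp)
  have "1 \<le> (1 - y + y\<^sup>2) * exp y"
    using mult_left_mono[OF lower, of "1 - y + y\<^sup>2"] prod pos by linarith
  then have "exp (-y) \<le> 1 - y + y\<^sup>2"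
    by (simp add: exp_minus inverse_eq_divide divide_le_eq mult.commute)
  then show ?thesis using y_def by simp
qed

lemma summable_power_mult_bounded:
  fixes b :: "nat \<Rightarrow> real"
  assumes "0 \<le> g" "g < 1" "\<And>t. \<bar>b t\<bar> \<le> B"
  shows "summable (\<lambda>t. g ^ t * b t)"
proof (rule summable_comparison_test[where g="\<lambda>t. B * g ^ t"])
  have "norm (g ^ t * b t) \<le> B * g ^ t" for t
    using mult_right_mono[OF assms(3)[of t] zero_le_power[OF assms(1)]] assms(1)
    by (simp add: abs_mult mult.commute)
  then show "\<exists>N. \<forall>t\<ge>N. norm (g ^ t * b t) \<le> B * g ^ t" by blast
  show "summable (\<lambda>t. B * g ^ t)" using assms by (intro summable_mult summable_geometric) auto
qed

text \<open>No completeness is needed: a minimiser \<open>x\<close> of \<open>d x (T x)\<close> over the finite set is fixed,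
  since otherwise \<open>T x\<close> would attain a smaller value.\<close>

lemma finite_contraction_has_fixpoint:
  fixes d :: "'a \<Rightarrow> 'a \<Rightarrow> real"
  assumes "finite X" "X \<noteq> {}" "T ` X \<subseteq> X" "\<gamma> < 1"
    and contraction: "\<And>x y. x \<in> X \<Longrightarrow> y \<in> X \<Longrightarrow> d (T x) (T y) \<le> \<gamma> * d x y"
    and separating: "\<And>x y. x \<in> X \<Longrightarrow> y \<in> X \<Longrightarrow> x \<noteq> y \<Longrightarrow> 0 < d x y"
  shows "\<exists>x\<in>X. T x = x"
proof -
  obtain x where x: "x \<in> X" and min: "\<And>y. y \<in> X \<Longrightarrow> d x (T x) \<le> d y (T y)"
    using ex_is_arg_min_if_finite[OF assms(1,2), of "\<lambda>x. d x (T x)"]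
    by (auto simp: is_arg_min_linorder)
  have Tx: "T x \<in> X" using x assms(3) by auto
  show ?thesis
  proof (rule ccontr)
    assume "\<not> ?thesis"
    then have "0 < d x (T x)" using separating[OF x Tx] x by auto
    then have "\<gamma> * d x (T x) < d x (T x)"
      using \<open>\<gamma> < 1\<close> by simp
    then have "d (T x) (T (T x)) < d x (T x)"
      using contraction[OF x Tx] by linarith
    then show False using min[OF Tx] by linarith
  qed
qed

lemma ln_mult_le_two_ln:
  fixes N K \<delta> :: real
  assumes "1 \<le> N" "1 \<le> K" "0 < \<delta>" "\<delta> < 1"
  shows "ln (N * N * K / \<delta>) \<le> 2 * ln (N * K / \<delta>)"
proof -
  have "N * N * K / \<delta> * 1 \<le> N * N * K / \<delta> * (K / \<delta>)"
    using assms by (intro mult_left_mono) auto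
  then have "N * N * K / \<delta> \<le> (N * K / \<delta>)\<^sup>2"
    by (simp add: power2_eq_square field_simps)
  then have "ln (N * N * K / \<delta>) \<le> ln ((N * K / \<delta>)\<^sup>2)"
    using assms by (subst ln_le_cancel_iff) auto
  also have "\<dots> = 2 * ln (N * K / \<delta>)"
    using assms by (simp add: ln_realpow)
  finally show ?thesis .
qed

lemma regret_width_le:
  fixes V g C N K \<delta> n :: real
  assumes V: "0 \<le> V" and g: "g < 1" and C: "0 \<le> C" and NK: "1 \<le> N" "1 \<le> K"
    and \<delta>: "0 < \<delta>" "\<delta> < 1" and n: "1 \<le> n"
  shows "2 * (sqrt (C * (4 * (8 * V\<^sup>2 * ln (N * N * K / \<delta>) / n))) / (1 - g))
       \<le> 16 * (V / (1 - g)) * sqrt (C * ln (N * K / \<delta>) / n)"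
proof -
  have "C * (4 * (8 * V\<^sup>2 * ln (N * N * K / \<delta>) / n)) \<le> C * (4 * (8 * V\<^sup>2 * (2 * ln (N * K / \<delta>)) / n))"
    using ln_mult_le_two_ln[OF NK \<delta>] C n V by (intro mult_left_mono divide_right_mono) auto
  also have "\<dots> = (8 * V)\<^sup>2 * (C * ln (N * K / \<delta>) / n)"
    by (simp add: power2_eq_square field_simps)
  finally have "sqrt (C * (4 * (8 * V\<^sup>2 * ln (N * N * K / \<delta>) / n)))
      \<le> sqrt ((8 * V)\<^sup>2 * (C * ln (N * K / \<delta>) / n))"
    by (rule real_sqrt_le_mono)
  also have "\<dots> = 8 * V * sqrt (C * ln (N * K / \<delta>) / n)"
    using V by (simp only: real_sqrt_mult real_sqrt_abs abs_of_nonneg)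
  finally have "2 * (sqrt (C * (4 * (8 * V\<^sup>2 * ln (N * N * K / \<delta>) / n))) / (1 - g))
      \<le> 2 * (8 * V * sqrt (C * ln (N * K / \<delta>) / n) / (1 - g))"
    using g by (intro mult_left_mono divide_right_mono) auto
  then show ?thesis by simp
qed

locale finite_mdp =
  fixes S A :: "nat set" and P :: "nat \<Rightarrow> nat \<Rightarrow> nat pmf" and R :: qfun
    and Rmax \<gamma> :: real and d0 :: "nat pmf" and dD :: "(nat \<times> nat) pmf"
  assumes finite_S: "finite S" and finite_A: "finite A"
    and set_pmf_P: "\<And>s a. s \<in> S \<Longrightarrow> a \<in> A \<Longrightarrow> set_pmf (P s a) \<subseteq> S"
    and R_bounds: "\<And>s a. s \<in> S \<Longrightarrow> a \<in> A \<Longrightarrow> 0 \<le> R s a \<and> R s a \<le> Rmax"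
    and \<gamma>_nonneg: "0 \<le> \<gamma>" and \<gamma>_less_1: "\<gamma> < 1"
    and set_pmf_d0: "set_pmf d0 \<subseteq> S" and set_pmf_dD: "set_pmf dD \<subseteq> S \<times> A"
begin

definition Vmax :: real where "Vmax = Rmax / (1 - \<gamma>)"

definition valid_policy :: "policy \<Rightarrow> bool" where
  "valid_policy pol \<longleftrightarrow> (\<forall>s\<in>S. set_pmf (pol s) \<subseteq> A)"

definition valid_qfun :: "qfun \<Rightarrow> bool" where
  "valid_qfun f \<longleftrightarrow> (\<forall>s a. (s \<in> S \<and> a \<in> A \<longrightarrow> 0 \<le> f s a \<and> f s a \<le> Vmax)
                          \<and> (\<not> (s \<in> S \<and> a \<in> A) \<longrightarrow> f s a = 0))"

abbreviation T :: "policy \<Rightarrow> qfun \<Rightarrow> qfun" where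
  "T pol f \<equiv> Tpi S A R \<gamma> P pol f"

lemma Tpi_eq: "s \<in> S \<Longrightarrow> a \<in> A \<Longrightarrow> T pol f s a = R s a + \<gamma> * measure_pmf.expectation (P s a) (fpol f pol)"
  unfolding Tpi_def by simp

lemma Rmax_plus_discounted_Vmax: "Rmax + \<gamma> * Vmax = Vmax"
  using \<gamma>_less_1 unfolding Vmax_def by (simp add: field_simps)

lemma finite_set_pmf_P: "s \<in> S \<Longrightarrow> a \<in> A \<Longrightarrow> finite (set_pmf (P s a))"
  using set_pmf_P finite_S finite_subset by blast

lemma finite_set_pmf_policy: "valid_policy pol \<Longrightarrow> s \<in> S \<Longrightarrow> finite (set_pmf (pol s))"
  using finite_A finite_subset unfolding valid_policy_def by blast

lemma set_pmf_sdist: "valid_policy pol \<Longrightarrow> set_pmf (sdist P d0 pol t) \<subseteq> S"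
proof (induction t)
  case 0
  then show ?case using set_pmf_d0 by simp
next
  case (Suc t)
  then show ?case using set_pmf_P unfolding valid_policy_def by (fastforce simp: set_bind_pmf)
qed

lemma set_pmf_sadist: "valid_policy pol \<Longrightarrow> set_pmf (sadist P d0 pol t) \<subseteq> S \<times> A"
  using set_pmf_sdist[of pol t] unfolding sadist_def valid_policy_def by (auto simp: set_bind_pmf)

lemma finite_set_pmf_sdist: "valid_policy pol \<Longrightarrow> finite (set_pmf (sdist P d0 pol t))"
  using set_pmf_sdist finite_S finite_subset by blast

lemma finite_set_pmf_sadist: "valid_policy pol \<Longrightarrow> finite (set_pmf (sadist P d0 pol t))"
  using set_pmf_sadist finite_S finite_A finite_subset by (metis finite_SigmaI)

lemma expectation_sadist:
  fixes h :: "nat \<times> nat \<Rightarrow> real"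
  assumes "valid_policy pol"
  shows "measure_pmf.expectation (sadist P d0 pol t) h
       = measure_pmf.expectation (sdist P d0 pol t) (\<lambda>s. measure_pmf.expectation (pol s) (\<lambda>a. h (s, a)))"
  unfolding sadist_def
  by (rule trans[OF expectation_bind_pmf_finite[OF finite_S]])
     (use assms in \<open>auto simp: set_pmf_sdist finite_set_pmf_policy\<close>)

lemma expectation_sdist_Suc:
  fixes h :: "nat \<Rightarrow> real"
  assumes vp: "valid_policy pol"
  shows "measure_pmf.expectation (sdist P d0 pol (Suc t)) h
       = measure_pmf.expectation (sdist P d0 pol t)
           (\<lambda>s. measure_pmf.expectation (pol s) (\<lambda>a. measure_pmf.expectation (P s a) h))"
proof -
  have "measure_pmf.expectation (sdist P d0 pol (Suc t)) h
      = measure_pmf.expectation (sdist P d0 pol t) (\<lambda>s. measure_pmf.expectation (pol s \<bind> P s) h)"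
    by simp (rule expectation_bind_pmf_finite[OF finite_S],
             use vp set_pmf_sdist[OF vp] in \<open>auto simp: set_bind_pmf finite_set_pmf_policy
                                       valid_policy_def finite_set_pmf_P subset_eq\<close>)
  also have "\<dots> = measure_pmf.expectation (sdist P d0 pol t)
           (\<lambda>s. measure_pmf.expectation (pol s) (\<lambda>a. measure_pmf.expectation (P s a) h))"
  proof (intro integral_cong_AE AE_pmfI)
    fix s assume "s \<in> set_pmf (sdist P d0 pol t)"
    then have s: "s \<in> S" using set_pmf_sdist vp by auto
    show "measure_pmf.expectation (pol s \<bind> P s) h
        = measure_pmf.expectation (pol s) (\<lambda>a. measure_pmf.expectation (P s a) h)"
      by (rule expectation_bind_pmf_finite[OF finite_A])
         (use vp s in \<open>auto simp: valid_policy_def finite_set_pmf_P\<close>)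
  qed auto
  finally show ?thesis .
qed

lemma fpol_bounds:
  assumes f: "valid_qfun f" and vp: "valid_policy pol" and s: "s \<in> S"
  shows "0 \<le> fpol f pol s \<and> fpol f pol s \<le> Vmax"
proof -
  have fa: "\<And>a. a \<in> set_pmf (pol s) \<Longrightarrow> 0 \<le> f s a \<and> f s a \<le> Vmax"
    using f vp s unfolding valid_qfun_def valid_policy_def by auto
  have "0 \<le> fpol f pol s"
    unfolding fpol_def by (intro integral_nonneg_AE AE_pmfI) (use fa in auto)
  moreover have "fpol f pol s \<le> measure_pmf.expectation (pol s) (\<lambda>a. Vmax)"
    unfolding fpol_def
    by (intro integral_mono_AE AE_pmfI integrable_measure_pmf_finite finite_set_pmf_policy vp s)
       (use fa in auto)
  ultimately show ?thesis by simp
qed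

subsection \<open>Performance difference\<close>

definition value_at :: "policy \<Rightarrow> qfun \<Rightarrow> nat \<Rightarrow> real" where
  "value_at pol f t = measure_pmf.expectation (sdist P d0 pol t) (fpol f pol)"

definition reward_at :: "policy \<Rightarrow> nat \<Rightarrow> real" where
  "reward_at pol t = measure_pmf.expectation (sadist P d0 pol t) (\<lambda>(s, a). R s a)"

lemma abs_value_at_le: "valid_qfun f \<Longrightarrow> valid_policy pol \<Longrightarrow> \<bar>value_at pol f t\<bar> \<le> Vmax"
  unfolding value_at_def by (rule abs_expectation_pmf_le) (use fpol_bounds set_pmf_sdist in fastforce)

lemma abs_reward_at_le: "valid_policy pol \<Longrightarrow> \<bar>reward_at pol t\<bar> \<le> Rmax"
  unfolding reward_at_def by (rule abs_expectation_pmf_le) (use R_bounds set_pmf_sadist in fastforce)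

lemma expectation_sadist_Tpi:
  assumes vp: "valid_policy pol"
  shows "measure_pmf.expectation (sadist P d0 pol t) (\<lambda>(s, a). T pol f s a)
       = reward_at pol t + \<gamma> * value_at pol f (Suc t)"
proof -
  let ?E = "measure_pmf.expectation"
  have "?E (sadist P d0 pol t) (\<lambda>(s, a). T pol f s a)
      = ?E (sdist P d0 pol t) (\<lambda>s. ?E (pol s) (\<lambda>a. R s a)
          + \<gamma> * ?E (pol s) (\<lambda>a. ?E (P s a) (fpol f pol)))"
    unfolding expectation_sadist[OF vp]
  proof (intro integral_cong_AE AE_pmfI)
    fix s assume "s \<in> set_pmf (sdist P d0 pol t)"
    then have s: "s \<in> S" using set_pmf_sdist vp by auto
    have "?E (pol s) (\<lambda>a. T pol f s a) = ?E (pol s) (\<lambda>a. R s a + \<gamma> * ?E (P s a) (fpol f pol))"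
      by (intro integral_cong_AE AE_pmfI) (use vp s in \<open>auto simp: valid_policy_def Tpi_eq subset_eq\<close>)
    then show "?E (pol s) (\<lambda>a. case (s, a) of (s, a) \<Rightarrow> T pol f s a) = ?E (pol s) (\<lambda>a. R s a)
        + \<gamma> * ?E (pol s) (\<lambda>a. ?E (P s a) (fpol f pol))"
      using finite_set_pmf_policy[OF vp s] by (simp add: integrable_measure_pmf_finite)
  qed auto
  also have "\<dots> = ?E (sdist P d0 pol t) (\<lambda>s. ?E (pol s) (\<lambda>a. R s a))
        + \<gamma> * ?E (sdist P d0 pol t) (\<lambda>s. ?E (pol s) (\<lambda>a. ?E (P s a) (fpol f pol)))"
    using finite_set_pmf_sdist[OF vp] by (simp add: integrable_measure_pmf_finite)
  also have "\<dots> = reward_at pol t + \<gamma> * value_at pol f (Suc t)"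
    unfolding reward_at_def value_at_def expectation_sdist_Suc[OF vp] expectation_sadist[OF vp]
    by simp
  finally show ?thesis .
qed

lemma Jf_minus_Jret_telescope:
  assumes f: "valid_qfun f" and vp: "valid_policy pol"
  shows "Jf d0 f pol - Jret R \<gamma> P d0 pol
       = (\<Sum>t. \<gamma> ^ t * measure_pmf.expectation (sadist P d0 pol t) (\<lambda>(s, a). f s a - T pol f s a))"
proof -
  let ?v = "value_at pol f" and ?r = "reward_at pol"
  have residual: "measure_pmf.expectation (sadist P d0 pol t) (\<lambda>(s, a). f s a - T pol f s a)
      = ?v t - ?r t - \<gamma> * ?v (Suc t)" for t
  proof -
    have "measure_pmf.expectation (sadist P d0 pol t) (\<lambda>(s, a). f s a) = ?v t"
      unfolding value_at_def fpol_def[abs_def] by (subst expectation_sadist[OF vp]) simp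
    then show ?thesis
      using expectation_sadist_Tpi[OF vp, of t f] finite_set_pmf_sadist[OF vp, of t]
      by (simp add: split_def integrable_measure_pmf_finite)
  qed
  have s1: "summable (\<lambda>t. \<gamma> ^ t * ?v t)"
    by (rule summable_power_mult_bounded[OF \<gamma>_nonneg \<gamma>_less_1 abs_value_at_le[OF f vp]])
  have s2: "summable (\<lambda>t. \<gamma> ^ t * ?r t)"
    by (rule summable_power_mult_bounded[OF \<gamma>_nonneg \<gamma>_less_1 abs_reward_at_le[OF vp]])
  have s3: "summable (\<lambda>t. \<gamma> ^ Suc t * ?v (Suc t))"
    using s1 summable_Suc_iff[of "\<lambda>t. \<gamma> ^ t * ?v t"] by simp
  have "(\<Sum>t. \<gamma> ^ t * measure_pmf.expectation (sadist P d0 pol t) (\<lambda>(s, a). f s a - T pol f s a))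
      = (\<Sum>t. (\<gamma> ^ t * ?v t - \<gamma> ^ t * ?r t) - \<gamma> ^ Suc t * ?v (Suc t))"
    by (simp add: residual algebra_simps)
  also have "\<dots> = ((\<Sum>t. \<gamma> ^ t * ?v t) - (\<Sum>t. \<gamma> ^ t * ?r t)) - (\<Sum>t. \<gamma> ^ Suc t * ?v (Suc t))"
    using s1 s2 s3 by (simp add: suminf_diff summable_diff)
  also have "(\<Sum>t. \<gamma> ^ Suc t * ?v (Suc t)) = (\<Sum>t. \<gamma> ^ t * ?v t) - ?v 0"
    using suminf_split_head[OF s1] by simp
  also have "?v 0 = Jf d0 f pol" unfolding value_at_def Jf_def by simp
  also have "(\<Sum>t. \<gamma> ^ t * ?r t) = Jret R \<gamma> P d0 pol" unfolding reward_at_def Jret_def by simp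
  finally show ?thesis by simp
qed

abbreviation occ :: "policy \<Rightarrow> nat \<times> nat \<Rightarrow> real" where
  "occ pol x \<equiv> docc \<gamma> P d0 pol (fst x) (snd x)"

lemma sum_occupancy_mult:
  fixes h :: "nat \<times> nat \<Rightarrow> real"
  assumes vp: "valid_policy pol"
  shows "(\<Sum>x\<in>S \<times> A. occ pol x * h x)
       = (1 - \<gamma>) * (\<Sum>t. \<gamma> ^ t * measure_pmf.expectation (sadist P d0 pol t) h)"
proof -
  let ?p = "\<lambda>t x. pmf (sadist P d0 pol t) x"
  have summable: "summable (\<lambda>t. \<gamma> ^ t * (?p t x * c))" for x c
    by (rule summable_power_mult_bounded[OF \<gamma>_nonneg \<gamma>_less_1, of _ "\<bar>c\<bar>"])
       (auto simp: abs_mult intro!: mult_left_le_one_le pmf_le_1)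
  have "(\<Sum>x\<in>S \<times> A. occ pol x * h x) = (1 - \<gamma>) * (\<Sum>x\<in>S \<times> A. \<Sum>t. \<gamma> ^ t * (?p t x * h x))"
    unfolding docc_def sum_distrib_left
    using suminf_mult2[OF summable[of _ 1, simplified]]
    by (intro sum.cong refl) (simp add: mult.assoc)
  also have "(\<Sum>x\<in>S \<times> A. \<Sum>t. \<gamma> ^ t * (?p t x * h x)) = (\<Sum>t. \<Sum>x\<in>S \<times> A. \<gamma> ^ t * (?p t x * h x))"
    by (rule suminf_sum[symmetric]) (use summable in simp)
  also have "\<dots> = (\<Sum>t. \<gamma> ^ t * measure_pmf.expectation (sadist P d0 pol t) h)"
    by (simp add: expectation_pmf_eq_sum[OF finite_SigmaI[OF finite_S finite_A] set_pmf_sadist[OF vp]]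
                  sum_distrib_left)
  finally show ?thesis .
qed

lemma sum_occupancy: "valid_policy pol \<Longrightarrow> (\<Sum>x\<in>S \<times> A. occ pol x) = 1"
  using sum_occupancy_mult[of pol "\<lambda>_. 1"] \<gamma>_nonneg \<gamma>_less_1 by (simp add: suminf_geometric)

lemma occupancy_nonneg: "0 \<le> docc \<gamma> P d0 pol s a"
proof -
  have "summable (\<lambda>t. \<gamma> ^ t * pmf (sadist P d0 pol t) (s, a))"
    by (rule summable_power_mult_bounded[OF \<gamma>_nonneg \<gamma>_less_1, where B=1]) (auto simp: pmf_le_1)
  then show ?thesis
    unfolding docc_def using \<gamma>_nonneg \<gamma>_less_1 by (intro mult_nonneg_nonneg suminf_nonneg) auto
qed

lemma performance_difference:
  assumes "valid_qfun f" "valid_policy pol"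
  shows "Jf d0 f pol - Jret R \<gamma> P d0 pol
       = (\<Sum>x\<in>S \<times> A. occ pol x * (f (fst x) (snd x) - T pol f (fst x) (snd x))) / (1 - \<gamma>)"
  using Jf_minus_Jret_telescope[OF assms] sum_occupancy_mult[OF assms(2), of "\<lambda>(s, a). f s a - T pol f s a"]
    \<gamma>_less_1
  by (simp add: split_def)

lemma concentrability_nonneg:
  assumes "S \<noteq> {}" "A \<noteq> {}"
  shows "0 \<le> Cconc S A \<gamma> P d0 dD pol"
proof -
  obtain s a where sa: "s \<in> S" "a \<in> A" using assms by blast
  have "0 \<le> docc \<gamma> P d0 pol s a / pmf dD (s, a)" using occupancy_nonneg by simp
  also have "\<dots> \<le> Cconc S A \<gamma> P d0 dD pol" unfolding Cconc_def
    by (rule Max_ge) (use finite_S finite_A sa in \<open>auto intro!: rev_image_eqI[of "(s, a)"]\<close>)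
  finally show ?thesis .
qed

lemma occupancy_le_concentrability:
  assumes coverage: "\<forall>s\<in>S. \<forall>a\<in>A. pmf dD (s, a) = 0 \<longrightarrow> docc \<gamma> P d0 pol s a = 0"
    and x: "x \<in> S \<times> A"
  shows "occ pol x \<le> Cconc S A \<gamma> P d0 dD pol * pmf dD x"
proof (cases "pmf dD x = 0")
  case True
  then show ?thesis using coverage x by (cases x) auto
next
  case False
  have "occ pol x / pmf dD x \<le> Cconc S A \<gamma> P d0 dD pol" unfolding Cconc_def
    by (rule Max_ge) (use finite_S finite_A x in \<open>auto intro!: rev_image_eqI[of x]\<close>)
  then show ?thesis using False pmf_nonneg[of dD x] by (simp add: divide_le_eq)
qed

lemma abs_Jf_minus_Jret_le:
  assumes f: "valid_qfun f" and vp: "valid_policy pol"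
    and coverage: "\<forall>s\<in>S. \<forall>a\<in>A. pmf dD (s, a) = 0 \<longrightarrow> docc \<gamma> P d0 pol s a = 0"
  shows "\<bar>Jf d0 f pol - Jret R \<gamma> P d0 pol\<bar>
       \<le> sqrt (Cconc S A \<gamma> P d0 dD pol * measure_pmf.expectation dD (\<lambda>(s, a). (f s a - T pol f s a)\<^sup>2))
         / (1 - \<gamma>)"
proof -
  define e where "e x = f (fst x) (snd x) - T pol f (fst x) (snd x)" for x
  define C where "C = Cconc S A \<gamma> P d0 dD pol"
  \<comment> \<open>Cauchy--Schwarz with weights \<open>occ pol\<close>, which sum to one.\<close>
  have "(\<Sum>x\<in>S \<times> A. occ pol x * e x)\<^sup>2 \<le> (\<Sum>x\<in>S \<times> A. occ pol x * (e x)\<^sup>2)"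
    using Cauchy_Schwarz_ineq_sum[of "\<lambda>x. sqrt (occ pol x)" "\<lambda>x. sqrt (occ pol x) * e x" "S \<times> A"]
      sum_occupancy[OF vp] occupancy_nonneg
    by (simp add: power_mult_distrib mult.assoc[symmetric] real_sqrt_mult_self)
  also have "\<dots> \<le> (\<Sum>x\<in>S \<times> A. C * pmf dD x * (e x)\<^sup>2)"
    unfolding C_def by (intro sum_mono mult_right_mono occupancy_le_concentrability[OF coverage]) auto
  also have "\<dots> = C * measure_pmf.expectation dD (\<lambda>(s, a). (f s a - T pol f s a)\<^sup>2)"
    by (simp add: expectation_pmf_eq_sum[OF finite_SigmaI[OF finite_S finite_A] set_pmf_dD]
                  e_def split_def sum_distrib_left mult.assoc)
  finally have "\<bar>\<Sum>x\<in>S \<times> A. occ pol x * e x\<bar>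
      \<le> sqrt (C * measure_pmf.expectation dD (\<lambda>(s, a). (f s a - T pol f s a)\<^sup>2))"
    using real_sqrt_le_mono by fastforce
  then show ?thesis
    using performance_difference[OF f vp] \<gamma>_less_1 unfolding e_def C_def
    by (simp add: abs_div divide_right_mono)
qed

subsection \<open>The Bellman fixed point lies in a closed class\<close>

definition sup_dist :: "qfun \<Rightarrow> qfun \<Rightarrow> real" where
  "sup_dist f g = Max (insert 0 ((\<lambda>(s, a). \<bar>f s a - g s a\<bar>) ` (S \<times> A)))"

lemma sup_dist_nonneg: "0 \<le> sup_dist f g"
  unfolding sup_dist_def by (rule Max_ge) (use finite_S finite_A in auto)

lemma abs_diff_le_sup_dist: "s \<in> S \<Longrightarrow> a \<in> A \<Longrightarrow> \<bar>f s a - g s a\<bar> \<le> sup_dist f g"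
  unfolding sup_dist_def by (rule Max_ge) (use finite_S finite_A in \<open>auto intro!: rev_image_eqI[of "(s, a)"]\<close>)

lemma sup_dist_le_iff:
  "0 \<le> d \<Longrightarrow> sup_dist f g \<le> d \<longleftrightarrow> (\<forall>s\<in>S. \<forall>a\<in>A. \<bar>f s a - g s a\<bar> \<le> d)"
  unfolding sup_dist_def using finite_S finite_A by auto

lemma sup_dist_pos:
  assumes "valid_qfun f" "valid_qfun g" "f \<noteq> g"
  shows "0 < sup_dist f g"
proof -
  obtain s a where ne: "f s a \<noteq> g s a" using assms(3) by (metis ext)
  then have "s \<in> S" "a \<in> A" using assms(1,2) unfolding valid_qfun_def by metis+
  then show ?thesis using abs_diff_le_sup_dist[of s a f g] ne by linarith
qed

lemma abs_fpol_diff_le: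
  assumes vp: "valid_policy pol" and s: "s \<in> S"
    and d: "\<forall>s\<in>S. \<forall>a\<in>A. \<bar>f s a - g s a\<bar> \<le> d"
  shows "\<bar>fpol f pol s - fpol g pol s\<bar> \<le> d"
proof -
  have "fpol f pol s - fpol g pol s = measure_pmf.expectation (pol s) (\<lambda>a. f s a - g s a)"
    unfolding fpol_def using finite_set_pmf_policy[OF vp s] by (simp add: integrable_measure_pmf_finite)
  also have "\<bar>\<dots>\<bar> \<le> d"
    by (rule abs_expectation_pmf_le) (use vp s d in \<open>auto simp: valid_policy_def\<close>)
  finally show ?thesis .
qed

lemma Tpi_contraction:
  assumes vp: "valid_policy pol"
  shows "sup_dist (T pol f) (T pol g) \<le> \<gamma> * sup_dist f g"
proof -
  have "\<bar>T pol f s a - T pol g s a\<bar> \<le> \<gamma> * sup_dist f g" if s: "s \<in> S" and a: "a \<in> A" for s a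
  proof -
    have "T pol f s a - T pol g s a
        = \<gamma> * measure_pmf.expectation (P s a) (\<lambda>s'. fpol f pol s' - fpol g pol s')"
      using finite_set_pmf_P[OF s a] s a by (simp add: Tpi_eq integrable_measure_pmf_finite algebra_simps)
    also have "\<bar>\<dots>\<bar> \<le> \<gamma> * sup_dist f g"
      using \<gamma>_nonneg set_pmf_P[OF s a] abs_diff_le_sup_dist
      by (auto simp: abs_mult intro!: mult_left_mono abs_expectation_pmf_le abs_fpol_diff_le[OF vp])
    finally show ?thesis .
  qed
  then show ?thesis
    using sup_dist_le_iff \<gamma>_nonneg sup_dist_nonneg by (simp add: zero_le_mult_iff)
qed

lemma Tpi_has_fixpoint:
  assumes "finite F" "F \<noteq> {}" "\<forall>f\<in>F. valid_qfun f" "\<forall>f\<in>F. T pol f \<in> F" "valid_policy pol"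
  shows "\<exists>Q\<in>F. T pol Q = Q"
  by (rule finite_contraction_has_fixpoint[of F "T pol" \<gamma> sup_dist])
     (use assms \<gamma>_less_1 in \<open>auto intro: Tpi_contraction sup_dist_pos\<close>)

subsection \<open>Concentration of the excess squared loss\<close>

definition sq_loss :: "qfun \<Rightarrow> qfun \<Rightarrow> policy \<Rightarrow> sample \<Rightarrow> real" where
  "sq_loss g f pol x = (case x of (s, a, r, s') \<Rightarrow> (g s a - r - \<gamma> * fpol f pol s')\<^sup>2)"

definition excess_loss :: "qfun \<Rightarrow> qfun \<Rightarrow> policy \<Rightarrow> sample \<Rightarrow> real" where
  "excess_loss g f pol x = sq_loss g f pol x - sq_loss (T pol f) f pol x"

definition sq_bellman_err :: "qfun \<Rightarrow> qfun \<Rightarrow> policy \<Rightarrow> real" where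
  "sq_bellman_err g f pol = measure_pmf.expectation dD (\<lambda>(s, a). (g s a - T pol f s a)\<^sup>2)"

abbreviation DD :: "sample pmf" where
  "DD \<equiv> Ddist R P dD"

lemma sq_bellman_err_nonneg: "0 \<le> sq_bellman_err g f pol"
  unfolding sq_bellman_err_def by (intro integral_nonneg_AE AE_pmfI) auto

lemma set_pmf_Ddist:
  "x \<in> set_pmf DD \<Longrightarrow> \<exists>s a s'. x = (s, a, R s a, s') \<and> s \<in> S \<and> a \<in> A \<and> s' \<in> S"
  using set_pmf_dD set_pmf_P unfolding Ddist_def by (fastforce simp: set_bind_pmf)

lemma finite_set_pmf_Ddist: "finite (set_pmf DD)"
proof -
  have "set_pmf DD \<subseteq> (\<lambda>(s, a, s'). (s, a, R s a, s')) ` (S \<times> A \<times> S)"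
  proof
    fix x assume "x \<in> set_pmf DD"
    then obtain s a s' where "x = (s, a, R s a, s')" "s \<in> S" "a \<in> A" "s' \<in> S"
      using set_pmf_Ddist by blast
    then show "x \<in> (\<lambda>(s, a, s'). (s, a, R s a, s')) ` (S \<times> A \<times> S)"
      by (auto intro: image_eqI[where x="(s, a, s')"])
  qed
  then show ?thesis using finite_S finite_A finite_subset by blast
qed

lemma expectation_Ddist:
  fixes h :: "sample \<Rightarrow> real"
  shows "measure_pmf.expectation DD h
       = measure_pmf.expectation dD (\<lambda>(s, a). measure_pmf.expectation (P s a) (\<lambda>s'. h (s, a, R s a, s')))"
  unfolding Ddist_def
  by (subst expectation_bind_pmf_finite[OF finite_SigmaI[OF finite_S finite_A] set_pmf_dD])
     (auto simp: finite_set_pmf_P split_def)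

lemma excess_loss_eq:
  "excess_loss g f pol (s, a, R s a, s')
   = (g s a - T pol f s a) * (g s a + T pol f s a - 2 * (R s a + \<gamma> * fpol f pol s'))"
  unfolding excess_loss_def sq_loss_def by (simp add: power2_eq_square algebra_simps)

context
  fixes g f pol
  assumes g: "valid_qfun g" and f: "valid_qfun f" and Tf: "valid_qfun (T pol f)"
    and vp: "valid_policy pol"
begin

lemma excess_loss_bounds:
  assumes x: "x \<in> set_pmf DD"
  shows "\<bar>excess_loss g f pol x\<bar> \<le> 2 * Vmax\<^sup>2"
    and "(excess_loss g f pol x)\<^sup>2
         \<le> 4 * Vmax\<^sup>2 * (g (fst x) (fst (snd x)) - T pol f (fst x) (fst (snd x)))\<^sup>2"
proof -
  obtain s a s' where xs: "x = (s, a, R s a, s')" and s: "s \<in> S" and a: "a \<in> A" and s': "s' \<in> S"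
    using set_pmf_Ddist[OF x] by blast
  define y where "y = R s a + \<gamma> * fpol f pol s'"
  have "0 \<le> \<gamma> * fpol f pol s'" "\<gamma> * fpol f pol s' \<le> \<gamma> * Vmax"
    using fpol_bounds[OF f vp s'] \<gamma>_nonneg by (auto intro: mult_left_mono)
  then have y: "0 \<le> y" "y \<le> Vmax"
    using R_bounds[OF s a] Rmax_plus_discounted_Vmax unfolding y_def by linarith+
  have gb: "0 \<le> g s a" "g s a \<le> Vmax" and Tb: "0 \<le> T pol f s a" "T pol f s a \<le> Vmax"
    using g Tf s a unfolding valid_qfun_def by auto
  have Z: "excess_loss g f pol x = (g s a - T pol f s a) * (g s a + T pol f s a - 2 * y)"
    unfolding xs y_def by (rule excess_loss_eq)
  have a1: "\<bar>g s a - T pol f s a\<bar> \<le> Vmax" and a2: "\<bar>g s a + T pol f s a - 2 * y\<bar> \<le> 2 * Vmax"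
    using gb Tb y by linarith+
  have "\<bar>excess_loss g f pol x\<bar> \<le> Vmax * (2 * Vmax)"
    unfolding Z abs_mult by (rule mult_mono[OF a1 a2]) (use gb in auto)
  then show "\<bar>excess_loss g f pol x\<bar> \<le> 2 * Vmax\<^sup>2" by (simp add: power2_eq_square)
  have "(g s a + T pol f s a - 2 * y)\<^sup>2 \<le> (2 * Vmax)\<^sup>2"
    using a2 by (metis abs_ge_zero power2_abs power_mono)
  then have "(excess_loss g f pol x)\<^sup>2 \<le> (g s a - T pol f s a)\<^sup>2 * (2 * Vmax)\<^sup>2"
    unfolding Z power_mult_distrib by (intro mult_left_mono) auto
  then show "(excess_loss g f pol x)\<^sup>2
      \<le> 4 * Vmax\<^sup>2 * (g (fst x) (fst (snd x)) - T pol f (fst x) (fst (snd x)))\<^sup>2"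
    unfolding xs by (simp add: power_mult_distrib mult_ac)
qed

lemma expectation_excess_loss: "measure_pmf.expectation DD (excess_loss g f pol) = sq_bellman_err g f pol"
  unfolding expectation_Ddist sq_bellman_err_def
proof (intro integral_cong_AE AE_pmfI)
  fix x assume x: "x \<in> set_pmf dD"
  then obtain s a where xsa: "x = (s, a)" and s: "s \<in> S" and a: "a \<in> A"
    using set_pmf_dD by (cases x) auto
  let ?d = "g s a - T pol f s a"
  have "measure_pmf.expectation (P s a) (\<lambda>s'. excess_loss g f pol (s, a, R s a, s'))
      = measure_pmf.expectation (P s a) (\<lambda>s'. ?d * (g s a + T pol f s a - 2 * R s a)
          + (- 2 * \<gamma> * ?d) * fpol f pol s')"
    by (intro integral_cong_AE AE_pmfI) (auto simp: excess_loss_eq algebra_simps)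
  also have "\<dots> = ?d * (g s a + T pol f s a - 2 * R s a)
      + (- 2 * \<gamma> * ?d) * measure_pmf.expectation (P s a) (fpol f pol)"
    using finite_set_pmf_P[OF s a] by (simp add: integrable_measure_pmf_finite)
  also have "\<dots> = ?d\<^sup>2"
    using Tpi_eq[OF s a, of pol f] by (simp add: power2_eq_square algebra_simps)
  finally show "(case x of (s, a) \<Rightarrow> measure_pmf.expectation (P s a)
                  (\<lambda>s'. excess_loss g f pol (s, a, R s a, s')))
              = (case x of (s, a) \<Rightarrow> (g s a - T pol f s a)\<^sup>2)"
    unfolding xsa by simp
qed auto

lemma second_moment_excess_loss_le:
  "measure_pmf.expectation DD (\<lambda>x. (excess_loss g f pol x)\<^sup>2) \<le> 4 * Vmax\<^sup>2 * sq_bellman_err g f pol"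
proof -
  have "measure_pmf.expectation DD (\<lambda>x. (excess_loss g f pol x)\<^sup>2)
     \<le> measure_pmf.expectation DD
         (\<lambda>x. 4 * Vmax\<^sup>2 * (g (fst x) (fst (snd x)) - T pol f (fst x) (fst (snd x)))\<^sup>2)"
    by (intro integral_mono_AE AE_pmfI integrable_measure_pmf_finite finite_set_pmf_Ddist
        excess_loss_bounds)
  also have "\<dots> = 4 * Vmax\<^sup>2 * sq_bellman_err g f pol"
    unfolding expectation_Ddist sq_bellman_err_def by (simp add: split_def)
  finally show ?thesis .
qed

text \<open>Bernstein-type moment generating function bound: with \<open>\<lambda> = 1/(8 V\<^sup>2)\<close> the exponent stays
  in \<open>[-1, 1]\<close>, and the variance term \<open>\<lambda>\<^sup>2 E[Z\<^sup>2] \<le> \<lambda> E[Z]/2\<close> eats half of the mean.\<close>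

lemma excess_loss_mgf_le:
  assumes V: "Vmax > 0"
  defines "l \<equiv> 1 / (8 * Vmax\<^sup>2)"
  shows "measure_pmf.expectation DD (\<lambda>x. exp (- l * excess_loss g f pol x))
       \<le> exp (- l * sq_bellman_err g f pol / 2)"
proof -
  let ?Z = "excess_loss g f pol" and ?\<mu> = "sq_bellman_err g f pol"
  have l: "l > 0" "l * (2 * Vmax\<^sup>2) \<le> 1" using V unfolding l_def by auto
  have pointwise: "exp (- l * ?Z x) \<le> 1 + (- l) * ?Z x + l\<^sup>2 * (?Z x)\<^sup>2" if x: "x \<in> set_pmf DD" for x
  proof -
    have "\<bar>- l * ?Z x\<bar> \<le> l * (2 * Vmax\<^sup>2)"
      using excess_loss_bounds(1)[OF x] l by (simp add: abs_mult mult_left_mono)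
    then have "exp (- l * ?Z x) \<le> 1 + (- l * ?Z x) + (- l * ?Z x)\<^sup>2"
      using l by (intro exp_le_one_plus_x_plus_square) linarith
    then show ?thesis by (simp add: power_mult_distrib)
  qed
  have "measure_pmf.expectation DD (\<lambda>x. exp (- l * ?Z x))
     \<le> measure_pmf.expectation DD (\<lambda>x. 1 + (- l) * ?Z x + l\<^sup>2 * (?Z x)\<^sup>2)"
    by (intro integral_mono_AE AE_pmfI integrable_measure_pmf_finite finite_set_pmf_Ddist pointwise)
  also have "\<dots> = 1 - l * ?\<mu> + l\<^sup>2 * measure_pmf.expectation DD (\<lambda>x. (?Z x)\<^sup>2)"
    using finite_set_pmf_Ddist expectation_excess_loss by (simp add: integrable_measure_pmf_finite)
  also have "\<dots> \<le> 1 - l * ?\<mu> + l\<^sup>2 * (4 * Vmax\<^sup>2 * ?\<mu>)"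
    using second_moment_excess_loss_le by (intro add_left_mono mult_left_mono) auto
  also have "l\<^sup>2 * (4 * Vmax\<^sup>2 * ?\<mu>) = l * ?\<mu> / 2"
    unfolding l_def using V by (simp add: power2_eq_square field_simps)
  also have "1 - l * ?\<mu> + l * ?\<mu> / 2 \<le> exp (- l * ?\<mu> / 2)"
    using exp_ge_add_one_self[of "- l * ?\<mu> / 2"] by simp
  finally show ?thesis .
qed

end

lemma finite_set_pmf_dataset: "finite (set_pmf (dataset n DD))"
  unfolding dataset_def by (subst set_Pi_pmf) (auto intro!: finite_PiE_dflt finite_set_pmf_Ddist)

definition avg_excess_loss :: "nat \<Rightarrow> (nat \<Rightarrow> sample) \<Rightarrow> qfun \<Rightarrow> qfun \<Rightarrow> policy \<Rightarrow> real" where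
  "avg_excess_loss n Ds g f pol = (1 / real n) * (\<Sum>i<n. excess_loss g f pol (Ds i))"

lemma Lhat_minus_Lhat_Tpi:
  "Lhat \<gamma> n Ds g f pol - Lhat \<gamma> n Ds (T pol f) f pol = avg_excess_loss n Ds g f pol"
proof -
  have Lhat_eq: "Lhat \<gamma> n Ds h f pol = (1 / real n) * (\<Sum>i<n. sq_loss h f pol (Ds i))" for h
    unfolding Lhat_def sq_loss_def by simp
  show ?thesis
    unfolding Lhat_eq avg_excess_loss_def excess_loss_def by (simp add: sum_subtractf right_diff_distrib)
qed

context
  fixes g f pol
  assumes g: "valid_qfun g" and f: "valid_qfun f" and Tf: "valid_qfun (T pol f)"
    and vp: "valid_policy pol"
begin

lemma dataset_mgf_le:
  assumes V: "Vmax > 0"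
  defines "l \<equiv> 1 / (8 * Vmax\<^sup>2)"
  shows "measure_pmf.expectation (dataset n DD) (\<lambda>Ds. exp (- l * (\<Sum>i<n. excess_loss g f pol (Ds i))))
       \<le> exp (- l * sq_bellman_err g f pol / 2) ^ n"
proof -
  have "measure_pmf.expectation (dataset n DD) (\<lambda>Ds. exp (- l * (\<Sum>i<n. excess_loss g f pol (Ds i))))
      = measure_pmf.expectation (dataset n DD) (\<lambda>Ds. \<Prod>i\<in>{..<n}. exp (- l * excess_loss g f pol (Ds i)))"
    by (simp add: sum_distrib_left exp_sum)
  also have "\<dots> = (\<Prod>i\<in>{..<n}. measure_pmf.expectation DD (\<lambda>x. exp (- l * excess_loss g f pol x)))"
    unfolding dataset_def
    by (rule expectation_prod_Pi_pmf) (auto intro: integrable_measure_pmf_finite finite_set_pmf_Ddist)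
  also have "\<dots> \<le> (\<Prod>i\<in>{..<n}. exp (- l * sq_bellman_err g f pol / 2))"
    by (intro prod_mono conjI integral_nonneg_AE AE_pmfI)
       (use excess_loss_mgf_le[OF g f Tf vp V] in \<open>auto simp: l_def\<close>)
  finally show ?thesis by simp
qed

lemma prob_avg_excess_loss_low_le:
  assumes V: "Vmax > 0" and n: "n \<ge> 1"
  shows "measure_pmf.prob (dataset n DD)
           {Ds. avg_excess_loss n Ds g f pol \<le> sq_bellman_err g f pol / 2 - \<epsilon>}
       \<le> exp (- (1 / (8 * Vmax\<^sup>2)) * real n * \<epsilon>)"
proof -
  define l where "l = 1 / (8 * Vmax\<^sup>2)"
  define u where "u Ds = exp (- l * (\<Sum>i<n. excess_loss g f pol (Ds i)))" for Ds :: "nat \<Rightarrow> sample"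
  define c where "c = exp (l * real n * (\<epsilon> - sq_bellman_err g f pol / 2))"
  have l: "l > 0" using V unfolding l_def by simp
  have "{Ds. avg_excess_loss n Ds g f pol \<le> sq_bellman_err g f pol / 2 - \<epsilon>}
      \<subseteq> {Ds \<in> space (measure_pmf (dataset n DD)). c \<le> u Ds}"
  proof safe
    fix Ds assume "avg_excess_loss n Ds g f pol \<le> sq_bellman_err g f pol / 2 - \<epsilon>"
    then have "(\<Sum>i<n. excess_loss g f pol (Ds i)) \<le> real n * (sq_bellman_err g f pol / 2 - \<epsilon>)"
      using n unfolding avg_excess_loss_def by (simp add: field_simps)
    then have "l * real n * (\<epsilon> - sq_bellman_err g f pol / 2) \<le> - l * (\<Sum>i<n. excess_loss g f pol (Ds i))"
      using mult_left_mono[OF _ less_imp_le[OF l]] by (fastforce simp: algebra_simps)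
    then show "c \<le> u Ds" unfolding c_def u_def by simp
  qed simp
  then have "measure_pmf.prob (dataset n DD)
           {Ds. avg_excess_loss n Ds g f pol \<le> sq_bellman_err g f pol / 2 - \<epsilon>}
      \<le> measure_pmf.prob (dataset n DD) {Ds \<in> space (measure_pmf (dataset n DD)). c \<le> u Ds}"
    by (rule measure_pmf.finite_measure_mono) simp
  also have "\<dots> \<le> measure_pmf.expectation (dataset n DD) u / c"
    by (rule integral_Markov_inequality_measure)
       (auto simp: u_def c_def intro: integrable_measure_pmf_finite finite_set_pmf_dataset)
  also have "\<dots> \<le> exp (- l * sq_bellman_err g f pol / 2) ^ n / c"
    using dataset_mgf_le[OF V] unfolding u_def l_def c_def by (intro divide_right_mono) auto
  also have "\<dots> = exp (- l * real n * \<epsilon>)"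
    unfolding c_def by (simp add: exp_of_nat_mult[symmetric] exp_diff[symmetric] algebra_simps)
  finally show ?thesis unfolding l_def .
qed

end

lemma prob_exists_avg_excess_loss_low_le:
  assumes F: "finite F" "F \<noteq> {}" and Pols: "finite Pols" "Pols \<noteq> {}"
    and valid_F: "\<forall>f\<in>F. valid_qfun f" and valid_Pols: "\<forall>pol\<in>Pols. valid_policy pol"
    and closed: "\<forall>pol\<in>Pols. \<forall>f\<in>F. T pol f \<in> F"
    and V: "Vmax > 0" and n: "n \<ge> 1" and \<delta>: "0 < \<delta>"
  defines "\<epsilon> \<equiv> 8 * Vmax\<^sup>2 * ln (real (card F) * real (card F) * real (card Pols) / \<delta>) / real n"
  shows "measure_pmf.prob (dataset n DD)
           {Ds. \<exists>g\<in>F. \<exists>f\<in>F. \<exists>pol\<in>Pols. avg_excess_loss n Ds g f pol \<le> sq_bellman_err g f pol / 2 - \<epsilon>}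
       \<le> \<delta>"
proof -
  define N where "N = real (card F) * real (card F) * real (card Pols)"
  have N: "0 < N" using F Pols unfolding N_def by (simp add: card_gt_0_iff)
  let ?B = "\<lambda>k. {Ds. avg_excess_loss n Ds (fst k) (fst (snd k)) (snd (snd k))
                       \<le> sq_bellman_err (fst k) (fst (snd k)) (snd (snd k)) / 2 - \<epsilon>}"
  have events: "{Ds. \<exists>g\<in>F. \<exists>f\<in>F. \<exists>pol\<in>Pols. avg_excess_loss n Ds g f pol \<le> sq_bellman_err g f pol / 2 - \<epsilon>}
      = (\<Union>k\<in>F \<times> F \<times> Pols. ?B k)"
    by force
  have "measure_pmf.prob (dataset n DD) (\<Union>k\<in>F \<times> F \<times> Pols. ?B k)
      \<le> (\<Sum>k\<in>F \<times> F \<times> Pols. measure_pmf.prob (dataset n DD) (?B k))"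
    by (rule measure_UNION_le) (use F Pols in auto)
  also have "\<dots> \<le> (\<Sum>k\<in>F \<times> F \<times> Pols. exp (- (1 / (8 * Vmax\<^sup>2)) * real n * \<epsilon>))"
  proof (rule sum_mono)
    fix k assume "k \<in> F \<times> F \<times> Pols"
    then show "measure_pmf.prob (dataset n DD) (?B k) \<le> exp (- (1 / (8 * Vmax\<^sup>2)) * real n * \<epsilon>)"
      using prob_avg_excess_loss_low_le[OF _ _ _ _ V n] valid_F valid_Pols closed by auto
  qed
  also have "\<dots> = N * exp (- (1 / (8 * Vmax\<^sup>2)) * real n * \<epsilon>)"
    unfolding N_def by (simp add: card_cartesian_product)
  also have "- (1 / (8 * Vmax\<^sup>2)) * real n * \<epsilon> = - ln (N / \<delta>)"
    using V n unfolding \<epsilon>_def N_def by (simp add: field_simps)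
  also have "N * exp (- ln (N / \<delta>)) = \<delta>"
    using N \<delta> by (simp add: exp_minus)
  finally show ?thesis unfolding events .
qed

subsection \<open>Regret on the good event\<close>

text \<open>Closedness puts the fixed point \<open>Q = \<T> Q\<close> into \<open>F\<close>; its empirical Bellman error is
  at most \<open>\<epsilon>\<close>, so the minimiser's is too, and the latter bounds half its true error minus \<open>\<epsilon>\<close>.\<close>

lemma sq_bellman_err_minimizer_le:
  assumes F: "finite F" and valid_F: "\<forall>f\<in>F. valid_qfun f" and vp: "valid_policy pol"
    and closed: "\<forall>f\<in>F. T pol f \<in> F"
    and good: "\<forall>g\<in>F. \<forall>f\<in>F. sq_bellman_err g f pol / 2 - \<epsilon> < avg_excess_loss n Ds g f pol"
    and fh: "fh \<in> F" and minimizer: "\<forall>g\<in>F. Ehat F \<gamma> n Ds fh pol \<le> Ehat F \<gamma> n Ds g pol"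
  shows "sq_bellman_err fh fh pol \<le> 4 * \<epsilon>"
proof -
  obtain Q where Q: "Q \<in> F" "T pol Q = Q"
    using Tpi_has_fixpoint[OF F _ valid_F closed vp] fh by blast
  have "Ehat F \<gamma> n Ds Q pol \<le> \<epsilon>" unfolding Ehat_def
  proof (rule Max.boundedI)
    fix y assume "y \<in> (\<lambda>g. Lhat \<gamma> n Ds Q Q pol - Lhat \<gamma> n Ds g Q pol) ` F"
    then obtain g where g: "g \<in> F" and y: "y = Lhat \<gamma> n Ds Q Q pol - Lhat \<gamma> n Ds g Q pol"
      by blast
    have "y = - avg_excess_loss n Ds g Q pol"
      using Lhat_minus_Lhat_Tpi[of n Ds g Q pol] Q(2) y by simp
    moreover have "sq_bellman_err g Q pol / 2 - \<epsilon> < avg_excess_loss n Ds g Q pol"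
      using good g Q(1) by blast
    ultimately show "y \<le> \<epsilon>"
      using sq_bellman_err_nonneg[of g Q pol] by linarith
  qed (use F fh in auto)
  moreover have "avg_excess_loss n Ds fh fh pol \<le> Ehat F \<gamma> n Ds fh pol"
    unfolding Lhat_minus_Lhat_Tpi[symmetric] Ehat_def by (rule Max_ge) (use F closed fh in auto)
  moreover have "sq_bellman_err fh fh pol / 2 - \<epsilon> < avg_excess_loss n Ds fh fh pol"
    using good fh by blast
  moreover have "Ehat F \<gamma> n Ds fh pol \<le> Ehat F \<gamma> n Ds Q pol"
    using minimizer Q(1) by blast
  ultimately show ?thesis by linarith
qed

definition regret_within :: "qfun set \<Rightarrow> policy set \<Rightarrow> nat \<Rightarrow> (nat \<Rightarrow> sample) \<Rightarrow> real \<Rightarrow> bool" where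
  "regret_within F Pols n Ds \<epsilon> \<longleftrightarrow>
     (\<forall>(fhat::policy \<Rightarrow> qfun) (polhat::policy).
        (\<forall>pol\<in>Pols. fhat pol \<in> F \<and> (\<forall>g\<in>F. Ehat F \<gamma> n Ds (fhat pol) pol \<le> Ehat F \<gamma> n Ds g pol))
        \<and> polhat \<in> Pols \<and> (\<forall>pol\<in>Pols. Jf d0 (fhat pol) pol \<le> Jf d0 (fhat polhat) polhat)
        \<longrightarrow> (\<forall>pcp\<in>Pols. Jret R \<gamma> P d0 pcp - Jret R \<gamma> P d0 polhat \<le> \<epsilon>))"

lemma regret_within_of_sq_bellman_err_le:
  assumes ne: "S \<noteq> {}" "A \<noteq> {}" and Pols: "finite Pols"
    and valid_F: "\<forall>f\<in>F. valid_qfun f" and valid_Pols: "\<forall>pol\<in>Pols. valid_policy pol"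
    and coverage: "\<forall>pol\<in>Pols. \<forall>s\<in>S. \<forall>a\<in>A. pmf dD (s, a) = 0 \<longrightarrow> docc \<gamma> P d0 pol s a = 0"
    and small: "\<forall>pol\<in>Pols. \<forall>fh\<in>F. (\<forall>g\<in>F. Ehat F \<gamma> n Ds fh pol \<le> Ehat F \<gamma> n Ds g pol)
                                       \<longrightarrow> sq_bellman_err fh fh pol \<le> X"
    and \<epsilon>: "2 * (sqrt (Max (Cconc S A \<gamma> P d0 dD ` Pols) * X) / (1 - \<gamma>)) \<le> \<epsilon>"
  shows "regret_within F Pols n Ds \<epsilon>"
  unfolding regret_within_def
proof (intro allI impI ballI, elim conjE)
  fix fhat polhat pcp
  assume fhat: "\<forall>pol\<in>Pols. fhat pol \<in> F \<and> (\<forall>g\<in>F. Ehat F \<gamma> n Ds (fhat pol) pol \<le> Ehat F \<gamma> n Ds g pol)"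
    and polhat: "polhat \<in> Pols" and max: "\<forall>pol\<in>Pols. Jf d0 (fhat pol) pol \<le> Jf d0 (fhat polhat) polhat"
    and pcp: "pcp \<in> Pols"
  define err where "err = sqrt (Max (Cconc S A \<gamma> P d0 dD ` Pols) * X) / (1 - \<gamma>)"
  have estimate: "\<bar>Jf d0 (fhat pol) pol - Jret R \<gamma> P d0 pol\<bar> \<le> err" if pol: "pol \<in> Pols" for pol
  proof -
    have C: "0 \<le> Cconc S A \<gamma> P d0 dD pol" "Cconc S A \<gamma> P d0 dD pol \<le> Max (Cconc S A \<gamma> P d0 dD ` Pols)"
      using concentrability_nonneg[OF ne] Pols pol by auto
    have "sq_bellman_err (fhat pol) (fhat pol) pol \<le> X"
      using small fhat pol by blast
    then have "Cconc S A \<gamma> P d0 dD pol * sq_bellman_err (fhat pol) (fhat pol) pol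
        \<le> Max (Cconc S A \<gamma> P d0 dD ` Pols) * X"
      using C by (intro mult_mono) (auto simp: sq_bellman_err_nonneg)
    then have "sqrt (Cconc S A \<gamma> P d0 dD pol * sq_bellman_err (fhat pol) (fhat pol) pol) / (1 - \<gamma>)
        \<le> err"
      unfolding err_def using \<gamma>_less_1 by (intro divide_right_mono real_sqrt_le_mono) auto
    then show ?thesis
      using abs_Jf_minus_Jret_le[of "fhat pol" pol] fhat valid_F valid_Pols coverage pol
      unfolding sq_bellman_err_def by fastforce
  qed
  have "Jret R \<gamma> P d0 pcp - Jret R \<gamma> P d0 polhat
      = (Jret R \<gamma> P d0 pcp - Jf d0 (fhat pcp) pcp) + (Jf d0 (fhat pcp) pcp - Jf d0 (fhat polhat) polhat)
        + (Jf d0 (fhat polhat) polhat - Jret R \<gamma> P d0 polhat)"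
    by simp
  also have "\<dots> \<le> err + 0 + err"
    using estimate[OF pcp] estimate[OF polhat] max pcp by (intro add_mono) auto
  also have "\<dots> \<le> \<epsilon>"
    using \<epsilon> unfolding err_def by simp
  finally show "Jret R \<gamma> P d0 pcp - Jret R \<gamma> P d0 polhat \<le> \<epsilon>" .
qed

lemma Vmax_nonneg:
  assumes "S \<noteq> {}" "A \<noteq> {}"
  shows "0 \<le> Vmax"
proof -
  obtain s a where "s \<in> S" "a \<in> A" using assms by blast
  then have "0 \<le> Rmax" using R_bounds[of s a] by linarith
  then show ?thesis using \<gamma>_less_1 unfolding Vmax_def by simp
qed

lemma sq_bellman_err_eq_0_if_Vmax_0:
  assumes "Vmax = 0" "valid_qfun g" "valid_qfun (T pol f)"
  shows "sq_bellman_err g f pol = 0"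
proof -
  have "sq_bellman_err g f pol = measure_pmf.expectation dD (\<lambda>_. 0)"
    unfolding sq_bellman_err_def
  proof (intro integral_cong_AE AE_pmfI)
    fix x assume "x \<in> set_pmf dD"
    then obtain s a where "x = (s, a)" "s \<in> S" "a \<in> A" using set_pmf_dD by (cases x) auto
    then show "(case x of (s, a) \<Rightarrow> (g s a - T pol f s a)\<^sup>2) = 0"
      using assms unfolding valid_qfun_def by fastforce
  qed auto
  then show ?thesis by simp
qed

lemma regret_within_with_high_probability:
  assumes ne: "S \<noteq> {}" "A \<noteq> {}" and F: "finite F" and valid_F: "\<forall>f\<in>F. valid_qfun f"
    and Pols: "finite Pols" and valid_Pols: "\<forall>pol\<in>Pols. valid_policy pol"
    and closed: "\<forall>pol\<in>Pols. \<forall>f\<in>F. T pol f \<in> F"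
    and coverage: "\<forall>pol\<in>Pols. \<forall>s\<in>S. \<forall>a\<in>A. pmf dD (s, a) = 0 \<longrightarrow> docc \<gamma> P d0 pol s a = 0"
    and n: "n \<ge> 1" and \<delta>: "0 < \<delta>" "\<delta> < 1"
  defines "\<epsilon> \<equiv> 16 * (Vmax / (1 - \<gamma>))
                  * sqrt (Max (Cconc S A \<gamma> P d0 dD ` Pols)
                          * ln (real (card F) * real (card Pols) / \<delta>) / real n)"
  shows "1 - \<delta> \<le> measure_pmf.prob (dataset n DD) {Ds. regret_within F Pols n Ds \<epsilon>}"
proof (cases "F = {} \<or> Pols = {} \<or> Vmax = 0")
  case True
  have "regret_within F Pols n Ds \<epsilon>" for Ds
  proof (cases "Vmax = 0")
    case V: True
    show ?thesis
      by (rule regret_within_of_sq_bellman_err_le[OF ne Pols valid_F valid_Pols coverage, of n Ds 0])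
         (use V valid_F closed sq_bellman_err_eq_0_if_Vmax_0 in \<open>auto simp: \<epsilon>_def\<close>)
  next
    case False
    then show ?thesis using True unfolding regret_within_def by auto
  qed
  then show ?thesis using \<delta> by simp
next
  case False
  then have nonempty: "F \<noteq> {}" "Pols \<noteq> {}" and V: "0 < Vmax"
    using Vmax_nonneg[OF ne] by auto
  define \<eta> where "\<eta> = 8 * Vmax\<^sup>2 * ln (real (card F) * real (card F) * real (card Pols) / \<delta>) / real n"
  define bad where "bad = {Ds. \<exists>g\<in>F. \<exists>f\<in>F. \<exists>pol\<in>Pols.
                               avg_excess_loss n Ds g f pol \<le> sq_bellman_err g f pol / 2 - \<eta>}"
  have "measure_pmf.prob (dataset n DD) bad \<le> \<delta>"
    unfolding bad_def \<eta>_def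
    by (rule prob_exists_avg_excess_loss_low_le[OF F(1) nonempty(1) Pols nonempty(2) valid_F
          valid_Pols closed V n \<delta>(1)])
  moreover have "UNIV - bad \<subseteq> {Ds. regret_within F Pols n Ds \<epsilon>}"
  proof safe
    fix Ds assume "Ds \<notin> bad"
    then have good: "\<forall>pol\<in>Pols. \<forall>g\<in>F. \<forall>f\<in>F. sq_bellman_err g f pol / 2 - \<eta> < avg_excess_loss n Ds g f pol"
      unfolding bad_def by force
    have "0 \<le> Max (Cconc S A \<gamma> P d0 dD ` Pols)"
      using concentrability_nonneg[OF ne] nonempty(2) Pols by (auto simp: Max_ge_iff)
    then have "2 * (sqrt (Max (Cconc S A \<gamma> P d0 dD ` Pols) * (4 * \<eta>)) / (1 - \<gamma>)) \<le> \<epsilon>"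
      unfolding \<eta>_def \<epsilon>_def
      using regret_width_le Vmax_nonneg[OF ne] \<gamma>_less_1 nonempty F Pols \<delta> n
      by (simp add: card_gt_0_iff Suc_le_eq)
    then show "regret_within F Pols n Ds \<epsilon>"
      using good sq_bellman_err_minimizer_le[OF F valid_F] valid_Pols closed
      by (intro regret_within_of_sq_bellman_err_le[OF ne Pols valid_F valid_Pols coverage]) auto
  qed
  then have "measure_pmf.prob (dataset n DD) (UNIV - bad)
      \<le> measure_pmf.prob (dataset n DD) {Ds. regret_within F Pols n Ds \<epsilon>}"
    by (rule measure_pmf.finite_measure_mono) simp
  ultimately show ?thesis
    using measure_pmf.prob_compl[of bad "dataset n DD"] by simp
qed

end

theorem theorem1:
  shows "\<exists>c>0. \<forall>(S::nat set) (A::nat set) (P::nat \<Rightarrow> nat \<Rightarrow> nat pmf) (R::qfun) (Rmax::real)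
      (\<gamma>::real) (d0::nat pmf) (dD::(nat \<times> nat) pmf) (F::qfun set) (Pols::policy set)
      (n::nat) (\<delta>::real).
    finite S \<and> S \<noteq> {} \<and> finite A \<and> A \<noteq> {}
    \<and> (\<forall>s\<in>S. \<forall>a\<in>A. set_pmf (P s a) \<subseteq> S)
    \<and> (\<forall>s\<in>S. \<forall>a\<in>A. 0 \<le> R s a \<and> R s a \<le> Rmax)
    \<and> 0 \<le> \<gamma> \<and> \<gamma> < 1
    \<and> set_pmf d0 \<subseteq> S \<and> set_pmf dD \<subseteq> S \<times> A
    \<and> finite F
    \<and> (\<forall>f\<in>F. \<forall>s a. (s \<in> S \<and> a \<in> A \<longrightarrow> 0 \<le> f s a \<and> f s a \<le> Rmax / (1 - \<gamma>))
                   \<and> (\<not> (s \<in> S \<and> a \<in> A) \<longrightarrow> f s a = 0))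
    \<and> finite Pols
    \<and> (\<forall>pol\<in>Pols. (\<forall>s\<in>S. set_pmf (pol s) \<subseteq> A) \<and> (\<forall>s. s \<notin> S \<longrightarrow> pol s = return_pmf 0))
    \<and> (\<forall>pol\<in>Pols. \<forall>f\<in>F. Tpi S A R \<gamma> P pol f \<in> F)
    \<and> (\<forall>pol\<in>Pols. \<forall>s\<in>S. \<forall>a\<in>A. pmf dD (s, a) = 0 \<longrightarrow> docc \<gamma> P d0 pol s a = 0)
    \<and> n \<ge> 1 \<and> 0 < \<delta> \<and> \<delta> < 1
    \<longrightarrow> measure_pmf.prob (dataset n (Ddist R P dD))
          {Ds. \<forall>(fhat::policy \<Rightarrow> qfun) (polhat::policy).
             (\<forall>pol\<in>Pols. fhat pol \<in> F \<and> (\<forall>g\<in>F. Ehat F \<gamma> n Ds (fhat pol) pol \<le> Ehat F \<gamma> n Ds g pol))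
             \<and> polhat \<in> Pols \<and> (\<forall>pol\<in>Pols. Jf d0 (fhat pol) pol \<le> Jf d0 (fhat polhat) polhat)
             \<longrightarrow> (\<forall>pcp\<in>Pols. Jret R \<gamma> P d0 pcp - Jret R \<gamma> P d0 polhat
                   \<le> c * ((Rmax / (1 - \<gamma>)) / (1 - \<gamma>))
                       * sqrt ((Max ((Cconc S A \<gamma> P d0 dD) ` Pols))
                               * ln (real (card F) * real (card Pols) / \<delta>) / real n))}
        \<ge> 1 - \<delta>"
proof (intro exI[of _ "16::real"] conjI allI impI zero_less_numeral, elim conjE, goal_cases)
  case (1 S A P R Rmax \<gamma> d0 dD F Pols n \<delta>)
  interpret finite_mdp S A P R Rmax \<gamma> d0 dD
    by unfold_locales (use 1 in auto)
  show ?case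
    by (rule regret_within_with_high_probability[unfolded regret_within_def Vmax_def])
       (use 1 in \<open>auto simp: valid_qfun_def valid_policy_def Vmax_def\<close>)
qed

end
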